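(* Let $a=a_0+a_1e_1+a_2e_2+a_3e_3$ and $b=b_0+b_1e_1+b_2e_2+b_3e_3$ be nonzero elements of $C\ell_2$, let $U=\mathrm{diag}(1,-1,-1,-1)$ and $W(a,b)=L(a)-R(b)U$. Then the eigenvalues of $W(a,b)$ are $$\lambda_{1,2}=a_0\pm\sqrt{G(a)+H_b},\qquad \lambda_{3,4}=a_0+b_0\pm\sqrt{G(a)+G(b)+2(-a_1b_1-a_2b_2+a_3b_3)},$$ and $$\det(W(a,b))=(H_a-H_b)\big(H_a+H_b+2(a_0b_0+a_1b_1+a_2b_2-a_3b_3)\big)=(H_a-H_b)H_{\bar a+b}.$$
   Context: $C\ell_2$ is the 4-dimensional real associative algebra with basis $1,e_1,e_2,e_3$ and multiplication $e_1^2=e_2^2=1$, $e_3^2=-1$, $e_1e_2=e_3=-e_2e_1$, $e_1e_3=e_2=-e_3e_1$, $e_3e_2=e_1=-e_2e_3$. For $a=a_0+a_1e_1+a_2e_2+a_3e_3$ ($a_i\in\mathbb{R}$): $\bar a=a_0-a_1e_1-a_2e_2-a_3e_3$, $H_a=a_0^2-a_1^2-a_2^2+a_3^2$, $G(a)=a_1^2+a_2^2-a_3^2$, $$L(a)=\begin{pmatrix} a_0&a_1&a_2&-a_3\\ a_1&a_0&a_3&-a_2\\ a_2&-a_3&a_0&a_1\\ a_3&-a_2&a_1&a_0\end{pmatrix},\qquad R(a)=\begin{pmatrix} a_0&a_1&a_2&-a_3\\ a_1&a_0&-a_3&a_2\\ a_2&a_3&a_0&-a_1\\ a_3&a_2&-a_1&a_0\end{pmatrix}.$$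 (Square roots are complex when the radicand is negative.) The equation $ax=\bar x b$ is equivalent to $W(a,b)\overrightarrow{x}=0$, with $\overrightarrow{x}=(x_0,x_1,x_2,x_3)^T$. *)

theory Defs
  imports "Jordan_Normal_Form.Char_Poly"
begin

datatype cl2 = Cl2 (c0: real) (c1: real) (c2: real) (c3: real)

definition cl2_zero :: cl2 where "cl2_zero = Cl2 0 0 0 0"

definition cl2_add :: "cl2 \<Rightarrow> cl2 \<Rightarrow> cl2" where
  "cl2_add a b = Cl2 (c0 a + c0 b) (c1 a + c1 b) (c2 a + c2 b) (c3 a + c3 b)"

definition cl2_conj :: "cl2 \<Rightarrow> cl2" where
  "cl2_conj a = Cl2 (c0 a) (- c1 a) (- c2 a) (- c3 a)"

definition H :: "cl2 \<Rightarrow> real" where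
  "H a = (c0 a)^2 - (c1 a)^2 - (c2 a)^2 + (c3 a)^2"

definition G :: "cl2 \<Rightarrow> real" where
  "G a = (c1 a)^2 + (c2 a)^2 - (c3 a)^2"

definition Lmat :: "cl2 \<Rightarrow> real mat" where
  "Lmat a = mat_of_rows_list 4
     [[c0 a, c1 a, c2 a, - c3 a],
      [c1 a, c0 a, c3 a, - c2 a],
      [c2 a, - c3 a, c0 a, c1 a],
      [c3 a, - c2 a, c1 a, c0 a]]"

definition Rmat :: "cl2 \<Rightarrow> real mat" where
  "Rmat a = mat_of_rows_list 4
     [[c0 a, c1 a, c2 a, - c3 a],
      [c1 a, c0 a, - c3 a, c2 a],
      [c2 a, c3 a, c0 a, - c1 a],
      [c3 a, c2 a, - c1 a, c0 a]]"

definition Umat :: "real mat" where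
  "Umat = mat_of_rows_list 4
     [[1, 0, 0, 0],
      [0, -1, 0, 0],
      [0, 0, -1, 0],
      [0, 0, 0, -1]]"

definition Wmat :: "cl2 \<Rightarrow> cl2 \<Rightarrow> real mat" where
  "Wmat a b = Lmat a - Rmat b * Umat"

end

theory Submission imports Defs begin

text \<open>Cofactor expansion of the explicit matrix x I - W(a,b) shows that its characteristic
  polynomial is the product of the two real monic quadratics (x - a0)^2 - (G a + H b) and
  (x - a0 - b0)^2 - (G a + G b + 2(-a1 b1 - a2 b2 + a3 b3)); over the complex numbers each of
  them splits into the two stated linear factors. As the dimension is even, det W(a,b) is the
  constant term of the characteristic polynomial, i.e. the product of a0^2 - G a - H b = H a - H b
  and (a0 + b0)^2 - G a - G b + 2(a1 b1 + a2 b2 - a3 b3), which is H of (bar a + b).\<close>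

lemma det_expand_first_row:
  assumes "(A :: 'a :: comm_ring_1 mat) \<in> carrier_mat (Suc n) (Suc n)"
  shows "det A = (\<Sum>j<Suc n. (-1) ^ j * A $$ (0,j) * det (mat_delete A 0 j))"
  using laplace_expansion_row[OF assms, of 0] by (simp add: cofactor_def mult_ac)

lemma det_dim_2:
  assumes "(A :: 'a :: comm_ring_1 mat) \<in> carrier_mat 2 2"
  shows "det A = A$$(0,0) * A$$(1,1) - A$$(0,1) * A$$(1,0)"
proof -
  have "A \<in> carrier_mat (Suc 1) (Suc 1)" using assms by (simp add: numeral_eq_Suc)
  from det_expand_first_row[OF this] show ?thesis
    using assms by (simp add: det_single mat_delete_def)
qed

lemma det_dim_3:
  assumes "(A :: 'a :: comm_ring_1 mat) \<in> carrier_mat 3 3"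
  shows "det A = A$$(0,0) * (A$$(1,1) * A$$(2,2) - A$$(1,2) * A$$(2,1))
     - A$$(0,1) * (A$$(1,0) * A$$(2,2) - A$$(1,2) * A$$(2,0))
     + A$$(0,2) * (A$$(1,0) * A$$(2,1) - A$$(1,1) * A$$(2,0))"
proof -
  have "A \<in> carrier_mat (Suc 2) (Suc 2)" using assms by (simp add: numeral_eq_Suc)
  from det_expand_first_row[OF this] show ?thesis
    using assms by (simp add: det_dim_2 mat_delete_def numeral_eq_Suc)
qed

lemma det_dim_4:
  assumes "(A :: 'a :: comm_ring_1 mat) \<in> carrier_mat 4 4"
  shows "det A =
       A$$(0,0) * (A$$(1,1) * (A$$(2,2) * A$$(3,3) - A$$(2,3) * A$$(3,2))
     - A$$(1,2) * (A$$(2,1) * A$$(3,3) - A$$(2,3) * A$$(3,1))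
     + A$$(1,3) * (A$$(2,1) * A$$(3,2) - A$$(2,2) * A$$(3,1)))
     - A$$(0,1) * (A$$(1,0) * (A$$(2,2) * A$$(3,3) - A$$(2,3) * A$$(3,2))
     - A$$(1,2) * (A$$(2,0) * A$$(3,3) - A$$(2,3) * A$$(3,0))
     + A$$(1,3) * (A$$(2,0) * A$$(3,2) - A$$(2,2) * A$$(3,0)))
     + A$$(0,2) * (A$$(1,0) * (A$$(2,1) * A$$(3,3) - A$$(2,3) * A$$(3,1))
     - A$$(1,1) * (A$$(2,0) * A$$(3,3) - A$$(2,3) * A$$(3,0))
     + A$$(1,3) * (A$$(2,0) * A$$(3,1) - A$$(2,1) * A$$(3,0)))
     - A$$(0,3) * (A$$(1,0) * (A$$(2,1) * A$$(3,2) - A$$(2,2) * A$$(3,1))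
     - A$$(1,1) * (A$$(2,0) * A$$(3,2) - A$$(2,2) * A$$(3,0))
     + A$$(1,2) * (A$$(2,0) * A$$(3,1) - A$$(2,1) * A$$(3,0)))"
proof -
  have "A \<in> carrier_mat (Suc 3) (Suc 3)" using assms by (simp add: numeral_eq_Suc)
  from det_expand_first_row[OF this] show ?thesis
    using assms by (simp add: det_dim_3 mat_delete_def numeral_eq_Suc)
qed

lemma poly_char_poly_0:
  assumes "(A :: 'a :: field mat) \<in> carrier_mat n n"
  shows "poly (char_poly A) 0 = (-1) ^ n * det A"
proof -
  have "- char_matrix A 0 = (-1) \<cdot>\<^sub>m A"
    using assms by (auto simp: char_matrix_def)
  then show ?thesis
    using assms by (simp add: char_poly_matrix)
qed

lemma linear_factors_plus_minus_mult:
  fixes c s :: "'a :: comm_ring_1"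
  shows "[:-(c + s), 1:] * [:-(c - s), 1:] = [:-c, 1:]^2 - [:s^2:]"
  by (simp add: power2_eq_square algebra_simps)

text \<open>Right multiplication by U negates the last three columns of R(b).\<close>
lemma Wmat_eq: "Wmat a b = mat_of_rows_list 4
  [[c0 a - c0 b, c1 a + c1 b, c2 a + c2 b, - c3 a - c3 b],
   [c1 a - c1 b, c0 a + c0 b, c3 a - c3 b, - c2 a + c2 b],
   [c2 a - c2 b, - c3 a + c3 b, c0 a + c0 b, c1 a - c1 b],
   [c3 a - c3 b, - c2 a + c2 b, c1 a - c1 b, c0 a + c0 b]]"
  by (rule eq_matI)
    (auto simp: Wmat_def Lmat_def Rmat_def Umat_def mat_of_rows_list_def scalar_prod_def
      numeral_eq_Suc lessThan_Suc atLeast0LessThan less_Suc_eq)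

lemma Wmat_carrier: "Wmat a b \<in> carrier_mat 4 4"
  unfolding Wmat_eq mat_of_rows_list_def carrier_mat_def by simp

lemma char_poly_Wmat:
  "char_poly (Wmat a b) =
     ([:- c0 a, 1:]^2 - [:G a + H b:]) *
     ([:- (c0 a + c0 b), 1:]^2 - [:G a + G b + 2 * (- c1 a * c1 b - c2 a * c2 b + c3 a * c3 b):])"
  (is "_ = ?q")
proof (rule poly_ext)
  fix x :: real
  have "poly (char_poly (Wmat a b)) x = det (- char_matrix (Wmat a b) x)"
    using Wmat_carrier by (rule char_poly_matrix)
  also have "\<dots> = ((x - c0 a)^2 - (G a + H b)) *
     ((x - (c0 a + c0 b))^2 - (G a + G b + 2 * (- c1 a * c1 b - c2 a * c2 b + c3 a * c3 b)))"
    unfolding det_dim_4[OF uminus_carrier_mat[OF char_matrix_closed[OF Wmat_carrier]]]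
    by (simp add: char_matrix_def Wmat_eq mat_of_rows_list_def G_def H_def algebra_simps
        power2_eq_square)
  also have "\<dots> = poly ?q x"
    by (simp only: poly_mult poly_diff poly_power poly_pCons poly_0) (simp add: algebra_simps)
  finally show "poly (char_poly (Wmat a b)) x = poly ?q x" .
qed

theorem proposition5p7:
  fixes a b :: cl2
  assumes "a \<noteq> cl2_zero" and "b \<noteq> cl2_zero"
  defines "lam1 \<equiv> complex_of_real (c0 a) + csqrt (complex_of_real (G a + H b))"
      and "lam2 \<equiv> complex_of_real (c0 a) - csqrt (complex_of_real (G a + H b))"
      and "lam3 \<equiv> complex_of_real (c0 a + c0 b) + csqrt (complex_of_real
                 (G a + G b + 2 * (- c1 a * c1 b - c2 a * c2 b + c3 a * c3 b)))"
      and "lam4 \<equiv> complex_of_real (c0 a + c0 b) - csqrt (complex_of_real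
                 (G a + G b + 2 * (- c1 a * c1 b - c2 a * c2 b + c3 a * c3 b)))"
  shows "char_poly (map_mat complex_of_real (Wmat a b))
           = [:-lam1, 1:] * [:-lam2, 1:] * [:-lam3, 1:] * [:-lam4, 1:]
         \<and> det (Wmat a b) = (H a - H b) *
           (H a + H b + 2 * (c0 a * c0 b + c1 a * c1 b + c2 a * c2 b - c3 a * c3 b))
         \<and> det (Wmat a b) = (H a - H b) * H (cl2_add (cl2_conj a) b)"
proof (intro conjI)
  interpret of_real_poly_hom: map_poly_comm_ring_hom complex_of_real ..
  have "char_poly (map_mat complex_of_real (Wmat a b)) = map_poly of_real (char_poly (Wmat a b))"
    by (rule of_real_hom.char_poly_hom[OF Wmat_carrier])
  also have "\<dots> = ([:- of_real (c0 a), 1:]^2 - [:of_real (G a + H b):]) *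
     ([:- of_real (c0 a + c0 b), 1:]^2 - [:of_real (G a + G b + 2 * (- c1 a * c1 b - c2 a * c2 b + c3 a * c3 b)):])"
    unfolding char_poly_Wmat by (simp add: hom_distribs)
  also have "\<dots> = ([:-lam1, 1:] * [:-lam2, 1:]) * ([:-lam3, 1:] * [:-lam4, 1:])"
    unfolding lam1_def lam2_def lam3_def lam4_def linear_factors_plus_minus_mult power2_csqrt by simp
  also have "\<dots> = [:-lam1, 1:] * [:-lam2, 1:] * [:-lam3, 1:] * [:-lam4, 1:]"
    by (rule mult.assoc[symmetric])
  finally show "char_poly (map_mat complex_of_real (Wmat a b))
           = [:-lam1, 1:] * [:-lam2, 1:] * [:-lam3, 1:] * [:-lam4, 1:]" .
  have "det (Wmat a b) = poly (char_poly (Wmat a b)) 0"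
    using poly_char_poly_0[OF Wmat_carrier] by simp
  also have "\<dots> = (H a - H b) *
           (H a + H b + 2 * (c0 a * c0 b + c1 a * c1 b + c2 a * c2 b - c3 a * c3 b))"
    unfolding char_poly_Wmat by (simp add: G_def H_def algebra_simps power2_eq_square)
  finally show det: "det (Wmat a b) = \<dots>" .
  then show "det (Wmat a b) = (H a - H b) * H (cl2_add (cl2_conj a) b)"
    by (simp add: H_def cl2_add_def cl2_conj_def algebra_simps power2_eq_square)
qed

end
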